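(* Assume the setup in the context, with the fine-tuning regime, and let $0<\epsilon\le 1$ be such that $|\langle\tau_i,\tau_j\rangle|\le\epsilon\|\tau_i\|\|\tau_j\|$ for all $i\neq j$. Let $\mathbf{T}=[\tau_1,\dots,\tau_T]\in\mathbb{R}^{d\times T}$, $\mathbf{G}=\mathbf{T}^\top\mathbf{T}$ with eigenvalues $\lambda_1(\mathbf{G})\ge\dots\ge\lambda_T(\mathbf{G})$, and $1\le M<T$. Let $\mathbf{W}_e\in\mathbb{R}^{T\times M}$, $\mathbf{W}_d\in\mathbb{R}^{M\times T}$, $\hat{\mathbf{T}}=\mathbf{T}\mathbf{W}_e\mathbf{W}_d$ with $i$-th column $\hat\tau_i$, and suppose $\|\hat{\mathbf{T}}-\mathbf{T}\|_2^2=\lambda_{M+1}(\mathbf{G})$ (spectral norm). Fix $i\in[T]$ and $\alpha_i\in[0,1]$, let $\theta_{\mathrm{Neg},i}=\theta_0-\alpha_i\hat\tau_i$, and assume local smoothness holds with radius $r\ge 2\sqrt{C}+\sqrt{\lambda_{M+1}(\mathbf{G})}$. Then for every $j\neq i$, $$\mathcal{L}_j(\theta_{\mathrm{Neg},i})-\mathcal{L}_j(\theta_0)\le L_jC\Big(\frac{5}{2}+2\epsilon\Big)+L_j\lambda_{M+1}(\mathbf{G}).$$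
   Context: Setup: $\theta_0\in\mathbb{R}^d$ is a pretrained parameter vector; $\theta_1,\dots,\theta_T\in\mathbb{R}^d$ are fine-tuned parameters and $\tau_i:=\theta_i-\theta_0$ are task vectors. For each task $i$, $\mathcal{L}_i:\mathbb{R}^d\to\mathbb{R}$ is a differentiable loss (population risk). Norms are Euclidean. Fine-tuning regime: $\nabla\mathcal{L}_i(\theta_i)=0$ for all $i\in[T]$, and there is $C>0$ with $\|\tau_i\|^2\le C$ for all $i$. Local smoothness with radius $r>0$: for each $i$ there is $L_i\ge 0$ such that for all $\theta$ with $\|\theta-\theta_i\|\le r$, $\big|\mathcal{L}_i(\theta)-\mathcal{L}_i(\theta_i)-\langle\theta-\theta_i,\nabla\mathcal{L}_i(\theta_i)\rangle\big|\le\frac{L_i}{2}\|\theta-\theta_i\|^2$. The hypothesis $\|\hat{\mathbf{T}}-\mathbf{T}\|_2^2=\lambda_{M+1}(\mathbf{G})$ says the autoencoder reconstruction attains the optimal rank-$M$ spectral-norm error. *)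

theory Defs
  imports "HOL-Analysis.Analysis" "Jordan_Normal_Form.Char_Poly"
    "HOL-Computational_Algebra.Polynomial"
begin

definition gram_mat :: "nat \<Rightarrow> (nat \<Rightarrow> 'a::real_inner) \<Rightarrow> real mat" where
  "gram_mat n tau = mat n n (\<lambda>(i,j). tau i \<bullet> tau j)"

(* k-th largest eigenvalue (1-indexed, counted with algebraic multiplicity) of a square real
   matrix whose characteristic polynomial splits over the reals (e.g. a symmetric matrix):
   lambda_1 >= lambda_2 >= ... *)
definition eig_desc :: "real mat \<Rightarrow> nat \<Rightarrow> real" where
  "eig_desc A k = rev (sorted_list_of_multiset (proots (char_poly A))) ! (k - 1)"

(* Spectral (operator 2-) norm of the matrix with columns cols 0, ..., cols (n-1),
   viewed as a linear map R^n -> R^d *)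
definition spec_norm_cols :: "nat \<Rightarrow> (nat \<Rightarrow> 'a::real_normed_vector) \<Rightarrow> real" where
  "spec_norm_cols n v =
     Sup {norm (\<Sum>k<n. c k *\<^sub>R v k) | c. (\<Sum>k<n. (c k)\<^sup>2) \<le> 1}"

(* i-th column of  T We Wd  (We : n x M, Wd : M x n), columns of T given by tau *)
definition recon_col :: "nat \<Rightarrow> nat \<Rightarrow> (nat \<Rightarrow> 'a::real_vector) \<Rightarrow>
    (nat \<Rightarrow> nat \<Rightarrow> real) \<Rightarrow> (nat \<Rightarrow> nat \<Rightarrow> real) \<Rightarrow> nat \<Rightarrow> 'a" where
  "recon_col n m tau We Wd i = (\<Sum>k<n. (\<Sum>l<m. We k l * Wd l i) *\<^sub>R tau k)"

end

theory Submission
  imports Defs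
begin

text \<open>Smoothness around \<open>\<theta>\<^sub>j\<close>, where the gradient vanishes, bounds both
  \<open>\<L>\<^sub>j(\<theta>\<^sub>N\<^sub>e\<^sub>g\<^sub>,\<^sub>i) - \<L>\<^sub>j(\<theta>\<^sub>j)\<close> and \<open>\<L>\<^sub>j(\<theta>\<^sub>j) - \<L>\<^sub>j(\<theta>\<^sub>0)\<close>; the latter needs only
  \<open>\<parallel>\<tau>\<^sub>j\<parallel>\<^sup>2 \<le> C\<close>. For the former, \<open>\<theta>\<^sub>j - \<theta>\<^sub>N\<^sub>e\<^sub>g\<^sub>,\<^sub>i = \<alpha> \<tau>\<^sub>i + \<tau>\<^sub>j + \<alpha> e\<close> with \<open>e = \<hat>\<tau>\<^sub>i - \<tau>\<^sub>i\<close>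
  a column of \<open>\<hat>T - T\<close>, so \<open>\<parallel>e\<parallel>\<^sup>2 \<le> \<parallel>\<hat>T - T\<parallel>\<^sub>2\<^sup>2 = \<lambda>\<^sub>M\<^sub>+\<^sub>1\<close>; incoherence bounds
  \<open>\<parallel>\<alpha> \<tau>\<^sub>i + \<tau>\<^sub>j\<parallel>\<^sup>2 \<le> 2C + 2\<epsilon>C\<close>, and \<open>\<parallel>a + b\<parallel>\<^sup>2 \<le> 2\<parallel>a\<parallel>\<^sup>2 + 2\<parallel>b\<parallel>\<^sup>2\<close> combines the two.
  The radius hypothesis guarantees that both points lie in the smoothness ball.\<close>

lemma norm_col_le_spec_norm_cols:
  fixes v :: "nat \<Rightarrow> 'a::real_normed_vector"
  assumes "i < n"
  shows "norm (v i) \<le> spec_norm_cols n v"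
proof -
  let ?S = "{norm (\<Sum>k<n. c k *\<^sub>R v k) | c. (\<Sum>k<n. (c k)\<^sup>2) \<le> 1}"
  have "bdd_above ?S"
  proof (rule bdd_aboveI)
    fix x assume "x \<in> ?S"
    then obtain c where x: "x = norm (\<Sum>k<n. c k *\<^sub>R v k)" and c: "(\<Sum>k<n. (c k)\<^sup>2) \<le> 1"
      by blast
    have "\<bar>c k\<bar> \<le> 1" if "k < n" for k
    proof -
      have "(c k)\<^sup>2 \<le> (\<Sum>k<n. (c k)\<^sup>2)"
        using that by (intro member_le_sum) auto
      then have "(c k)\<^sup>2 \<le> 1"
        using c by linarith
      then show ?thesis
        by (simp add: abs_square_le_1)
    qed
    then have "(\<Sum>k<n. norm (c k *\<^sub>R v k)) \<le> (\<Sum>k<n. norm (v k))"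
      by (intro sum_mono) (auto intro: mult_left_le_one_le)
    then show "x \<le> (\<Sum>k<n. norm (v k))"
      unfolding x using norm_sum[of "\<lambda>k. c k *\<^sub>R v k" "{..<n}"] by linarith
  qed
  moreover have "norm (v i) \<in> ?S"
  proof -
    define c where "c = (\<lambda>k. if k = i then 1 else (0::real))"
    have sq: "(\<lambda>k. (c k)\<^sup>2) = c" and scale: "(\<lambda>k. c k *\<^sub>R v k) = (\<lambda>k. if k = i then v k else 0)"
      by (auto simp: c_def)
    have "(\<Sum>k<n. (c k)\<^sup>2) = 1" "(\<Sum>k<n. c k *\<^sub>R v k) = v i"
      using assms by (simp_all only: sq scale) (simp_all add: c_def sum.delta)
    then show ?thesis
      by (intro CollectI exI[of _ c]) simp
  qed
  ultimately show ?thesis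
    unfolding spec_norm_cols_def by (simp add: cSup_upper)
qed

lemma norm_add_squared_le: "(norm (a + b))\<^sup>2 \<le> 2 * (norm a)\<^sup>2 + 2 * (norm b)\<^sup>2"
proof -
  have "(norm (a + b))\<^sup>2 \<le> (norm a + norm b)\<^sup>2"
    by (simp add: norm_triangle_ineq power_mono)
  also have "\<dots> \<le> 2 * (norm a)\<^sup>2 + 2 * (norm b)\<^sup>2"
    using zero_le_square[of "norm a - norm b"] by (simp add: power2_eq_square algebra_simps)
  finally show ?thesis .
qed

lemma norm_scaleR_add_squared_le:
  fixes u v :: "'a::real_inner"
  assumes "\<bar>\<alpha>\<bar> \<le> 1"
  shows "(norm (\<alpha> *\<^sub>R u + v))\<^sup>2 \<le> (norm u)\<^sup>2 + (norm v)\<^sup>2 + 2 * \<bar>u \<bullet> v\<bar>"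
proof -
  have "(norm (\<alpha> *\<^sub>R u + v))\<^sup>2 = \<alpha>\<^sup>2 * (norm u)\<^sup>2 + (norm v)\<^sup>2 + 2 * (\<alpha> * (u \<bullet> v))"
    using dot_norm[of "\<alpha> *\<^sub>R u" v] by (simp add: power_mult_distrib)
  moreover have "\<alpha>\<^sup>2 * (norm u)\<^sup>2 \<le> (norm u)\<^sup>2"
    using assms by (simp add: abs_square_le_1 mult_left_le_one_le)
  moreover have "\<alpha> * (u \<bullet> v) \<le> \<bar>\<alpha>\<bar> * \<bar>u \<bullet> v\<bar>"
    by (metis abs_ge_self abs_mult)
  moreover have "\<bar>\<alpha>\<bar> * \<bar>u \<bullet> v\<bar> \<le> \<bar>u \<bullet> v\<bar>"
    using assms by (simp add: mult_left_le_one_le)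
  ultimately show ?thesis
    by linarith
qed

lemma le_sqrt_of_squared_le:
  fixes x :: real
  assumes "x\<^sup>2 \<le> y"
  shows "\<bar>x\<bar> \<le> sqrt y"
  using assms real_sqrt_le_mono[OF assms] by simp

lemma norm_negation_displacement:
  fixes u v e :: "'a::real_inner"
  assumes alpha: "0 \<le> \<alpha>" "\<alpha> \<le> 1"
    and u: "(norm u)\<^sup>2 \<le> C" and v: "(norm v)\<^sup>2 \<le> C" and e: "(norm e)\<^sup>2 \<le> \<mu>"
    and \<epsilon>: "0 \<le> \<epsilon>" and uv: "\<bar>u \<bullet> v\<bar> \<le> \<epsilon> * norm u * norm v"
  shows "norm (\<alpha> *\<^sub>R u + v + \<alpha> *\<^sub>R e) \<le> 2 * sqrt C + sqrt \<mu>"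
    and "(norm (\<alpha> *\<^sub>R u + v + \<alpha> *\<^sub>R e))\<^sup>2 \<le> 4 * C + 4 * \<epsilon> * C + 2 * \<mu>"
proof -
  have "norm (\<alpha> *\<^sub>R u) \<le> sqrt C"
    using alpha le_sqrt_of_squared_le[OF u] mult_left_le_one_le[of "norm u" \<alpha>] by simp
  moreover have "norm (\<alpha> *\<^sub>R e) \<le> sqrt \<mu>"
    using alpha le_sqrt_of_squared_le[OF e] mult_left_le_one_le[of "norm e" \<alpha>] by simp
  moreover have "norm v \<le> sqrt C"
    using le_sqrt_of_squared_le[OF v] by simp
  moreover have "norm (\<alpha> *\<^sub>R u + v + \<alpha> *\<^sub>R e) \<le> norm (\<alpha> *\<^sub>R u) + norm v + norm (\<alpha> *\<^sub>R e)"
    by (meson add_mono norm_triangle_ineq order_trans order_refl)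
  ultimately show "norm (\<alpha> *\<^sub>R u + v + \<alpha> *\<^sub>R e) \<le> 2 * sqrt C + sqrt \<mu>"
    by linarith
  have C: "0 \<le> C"
    using order_trans[OF zero_le_power2 u] .
  have "norm u * norm v \<le> sqrt C * sqrt C"
    using le_sqrt_of_squared_le[OF u] le_sqrt_of_squared_le[OF v] C by (intro mult_mono) auto
  then have "\<bar>u \<bullet> v\<bar> \<le> \<epsilon> * C"
    using uv \<epsilon> C mult_left_mono[of _ _ \<epsilon>]
    by (simp add: mult.assoc) (meson order_trans)
  then have "(norm (\<alpha> *\<^sub>R u + v))\<^sup>2 \<le> 2 * C + 2 * \<epsilon> * C"
    using norm_scaleR_add_squared_le[of \<alpha> u v] alpha u v by simp
  moreover have "(norm (\<alpha> *\<^sub>R e))\<^sup>2 \<le> \<mu>"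
    using alpha e by (simp add: power_mult_distrib abs_square_le_1 mult_left_le_one_le
        order_trans[OF _ e])
  ultimately show "(norm (\<alpha> *\<^sub>R u + v + \<alpha> *\<^sub>R e))\<^sup>2 \<le> 4 * C + 4 * \<epsilon> * C + 2 * \<mu>"
    using norm_add_squared_le[of "\<alpha> *\<^sub>R u + v" "\<alpha> *\<^sub>R e"] by linarith
qed

lemma local_smooth_stationary_diff_le:
  fixes f :: "'a::real_inner \<Rightarrow> real"
  assumes smooth: "\<And>x. norm (x - \<theta>) \<le> r \<Longrightarrow>
      \<bar>f x - f \<theta> - (x - \<theta>) \<bullet> g\<bar> \<le> L / 2 * (norm (x - \<theta>))\<^sup>2"
    and stationary: "g = 0"
    and "norm (x - \<theta>) \<le> r" "norm (y - \<theta>) \<le> r"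
  shows "f x - f y \<le> L / 2 * (norm (x - \<theta>))\<^sup>2 + L / 2 * (norm (y - \<theta>))\<^sup>2"
proof -
  have "\<bar>f z - f \<theta>\<bar> \<le> L / 2 * (norm (z - \<theta>))\<^sup>2" if "norm (z - \<theta>) \<le> r" for z
    using smooth[OF that] stationary by simp
  then show ?thesis
    using assms(3,4) by (smt (verit))
qed

theorem mainTheorem9:
  fixes \<theta>0 :: "'a::euclidean_space"
    and \<theta> :: "nat \<Rightarrow> 'a"
    and \<L> :: "nat \<Rightarrow> 'a \<Rightarrow> real"
    and grad :: "nat \<Rightarrow> 'a \<Rightarrow> 'a"
    and Lsm :: "nat \<Rightarrow> real"
    and T M :: nat
    and C \<epsilon> r \<alpha> :: real
    and We Wd :: "nat \<Rightarrow> nat \<Rightarrow> real"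
    and i :: nat
  defines "\<tau> \<equiv> (\<lambda>k. \<theta> k - \<theta>0)"
  defines "lamM1 \<equiv> eig_desc (gram_mat T \<tau>) (M + 1)"
  assumes diff: "\<And>k x. k < T \<Longrightarrow> (\<L> k has_derivative (\<lambda>h. grad k x \<bullet> h)) (at x)"
    and stationary: "\<And>k. k < T \<Longrightarrow> grad k (\<theta> k) = 0"
    and C_pos: "C > 0"
    and tau_bound: "\<And>k. k < T \<Longrightarrow> (norm (\<tau> k))\<^sup>2 \<le> C"
    and eps: "0 < \<epsilon>" "\<epsilon> \<le> 1"
    and incoh: "\<And>k l. k < T \<Longrightarrow> l < T \<Longrightarrow> k \<noteq> l \<Longrightarrow>
                 \<bar>\<tau> k \<bullet> \<tau> l\<bar> \<le> \<epsilon> * norm (\<tau> k) * norm (\<tau> l)"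
    and M: "1 \<le> M" "M < T"
    and recon: "(spec_norm_cols T (\<lambda>k. recon_col T M \<tau> We Wd k - \<tau> k))\<^sup>2 = lamM1"
    and i: "i < T"
    and alpha: "0 \<le> \<alpha>" "\<alpha> \<le> 1"
    and r_pos: "r > 0"
    and r_ge: "r \<ge> 2 * sqrt C + sqrt lamM1"
    and Lsm_nonneg: "\<And>k. k < T \<Longrightarrow> Lsm k \<ge> 0"
    and smooth: "\<And>k x. k < T \<Longrightarrow> norm (x - \<theta> k) \<le> r \<Longrightarrow>
                 \<bar>\<L> k x - \<L> k (\<theta> k) - (x - \<theta> k) \<bullet> grad k (\<theta> k)\<bar>
                   \<le> Lsm k / 2 * (norm (x - \<theta> k))\<^sup>2"
  shows "\<forall>j<T. j \<noteq> i \<longrightarrow>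
           \<L> j (\<theta>0 - \<alpha> *\<^sub>R recon_col T M \<tau> We Wd i) - \<L> j \<theta>0
             \<le> Lsm j * C * (5/2 + 2 * \<epsilon>) + Lsm j * lamM1"
proof (intro allI impI)
  fix j assume j: "j < T" "j \<noteq> i"
  define e where "e = recon_col T M \<tau> We Wd i - \<tau> i"
  define x where "x = \<theta>0 - \<alpha> *\<^sub>R recon_col T M \<tau> We Wd i"
  have e: "(norm e)\<^sup>2 \<le> lamM1"
    using norm_col_le_spec_norm_cols[OF i, of "\<lambda>k. recon_col T M \<tau> We Wd k - \<tau> k"]
    unfolding e_def recon[symmetric] by (simp add: power_mono)
  note displacement = norm_negation_displacement[OF alpha tau_bound[OF i] tau_bound[OF j(1)] e
      less_imp_le[OF eps(1)] incoh[OF i j(1) j(2)[symmetric]]]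
  have "x - \<theta> j = - (\<alpha> *\<^sub>R \<tau> i + \<tau> j + \<alpha> *\<^sub>R e)"
    unfolding x_def e_def \<tau>_def by (simp add: algebra_simps)
  then have x_dist: "norm (x - \<theta> j) = norm (\<alpha> *\<^sub>R \<tau> i + \<tau> j + \<alpha> *\<^sub>R e)"
    by (metis norm_minus_cancel)
  have \<theta>0_dist: "norm (\<theta>0 - \<theta> j) = norm (\<tau> j)"
    unfolding \<tau>_def by (simp add: norm_minus_commute)
  have "0 \<le> sqrt C" "0 \<le> sqrt lamM1"
    using C_pos order_trans[OF zero_le_power2 e] by simp_all
  then have "norm (\<tau> j) \<le> r"
    using le_sqrt_of_squared_le[OF tau_bound[OF j(1)]] r_ge by linarith
  moreover have "norm (x - \<theta> j) \<le> r"
    using displacement(1) x_dist r_ge by simp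
  ultimately have "\<L> j x - \<L> j \<theta>0 \<le> Lsm j / 2 * (norm (x - \<theta> j))\<^sup>2 + Lsm j / 2 * (norm (\<tau> j))\<^sup>2"
    using local_smooth_stationary_diff_le[OF smooth[OF j(1)] stationary[OF j(1)], where x = x and y = \<theta>0]
      \<theta>0_dist by simp
  also have "\<dots> \<le> Lsm j / 2 * (4 * C + 4 * \<epsilon> * C + 2 * lamM1) + Lsm j / 2 * C"
    using displacement(2) x_dist tau_bound[OF j(1)] Lsm_nonneg[OF j(1)]
    by (intro add_mono mult_left_mono) auto
  finally show "\<L> j (\<theta>0 - \<alpha> *\<^sub>R recon_col T M \<tau> We Wd i) - \<L> j \<theta>0
      \<le> Lsm j * C * (5/2 + 2 * \<epsilon>) + Lsm j * lamM1"
    unfolding x_def by (simp add: algebra_simps)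
qed

end
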